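(* For all $n\ge1$ and $k\ge1$, the greedy min-flip list $\mathcal{G}(n,k)$ has flip sequence $\sigma^k_n$; that is, if $\mathcal{G}(n,k)=G_1,\dots,G_N$ and $\sigma^k_n=f_1,\dots,f_{N'}$, then $N'=N-1$ and $G_{t+1}=\mathrm{flip}_{f_t}(G_t)$ for all $1\le t\le N-1$.
   Context: Fix integers $n\ge1$, $k\ge1$. A $k$-coloured permutation of $\{1,\dots,n\}$ is a sequence $\pi=p_1\cdots p_n$ with $p_i=v_i^{c_i}$, where $v_1\cdots v_n$ is a permutation of $\{1,\dots,n\}$ and each $c_i\in\{0,\dots,k-1\}$; the set of these is $\mathbf{C}(n,k)$. For $p=v^c$, $p^{+1}=v^{(c+1)\bmod k}$. For $1\le i\le n$, $\mathrm{flip}_i(p_1\cdots p_n)=p_i^{+1}p_{i-1}^{+1}\cdots p_1^{+1}p_{i+1}\cdots p_n$. The greedy min-flip list $\mathcal{G}(n,k)$ is produced as follows: start with $G_1=1^02^0\cdots n^0$; having produced $G_1,\dots,G_t$, let $i$ be the smallest integer in $\{1,\dots,n\}$ such that $\mathrm{flip}_i(G_t)\notin\{G_1,\dots,G_t\}$, and set $G_{t+1}=\mathrm{flip}_i(G_t)$; if no such $i$ exists, stop, and $\mathcal{G}(n,k)=G_1,\dots,G_t$. The sequence $\sigma^k_n$ is defined by $\sigma^k_1=1^{k-1}$ (the value $1$ repeated $k-1$ times; empty if $k=1$) and, for $n>1$, $\sigma^k_n=(\sigma^k_{n-1},n)^{kn-1},\sigma^k_{n-1}$, i.e. $kn-1$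 copies of the block "$\sigma^k_{n-1}$ followed by $n$", followed by one more copy of $\sigma^k_{n-1}$. *)

theory Defs
  imports Main
begin

(* A coloured symbol v^c is the pair (v, c); a k-coloured permutation is a list of such pairs. *)
type_synonym csym = "nat \<times> nat"

definition incr_col :: "nat \<Rightarrow> csym \<Rightarrow> csym" where
  "incr_col k p = (fst p, (snd p + 1) mod k)"

definition flip :: "nat \<Rightarrow> nat \<Rightarrow> csym list \<Rightarrow> csym list" where
  "flip k i p = map (incr_col k) (rev (take i p)) @ drop i p"

definition start_perm :: "nat \<Rightarrow> csym list" where
  "start_perm n = map (\<lambda>v. (v, 0)) [1..<n+1]"

definition greedy_list :: "nat \<Rightarrow> nat \<Rightarrow> csym list list \<Rightarrow> bool" where
  "greedy_list n k Gs \<longleftrightarrow>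
     Gs \<noteq> [] \<and> hd Gs = start_perm n \<and>
     (\<forall>t < length Gs - 1. \<exists>i \<in> {1..n}.
         Gs ! (t+1) = flip k i (Gs ! t) \<and>
         flip k i (Gs ! t) \<notin> set (take (t+1) Gs) \<and>
         (\<forall>j \<in> {1..n}. j < i \<longrightarrow> flip k j (Gs ! t) \<in> set (take (t+1) Gs))) \<and>
     (\<forall>i \<in> {1..n}. flip k i (last Gs) \<in> set Gs)"

fun sigma :: "nat \<Rightarrow> nat \<Rightarrow> nat list" where
  "sigma k 0 = []"
| "sigma k (Suc 0) = replicate (k - 1) 1"
| "sigma k (Suc (Suc m)) =
     concat (replicate (k * (m+2) - 1) (sigma k (Suc m) @ [m+2])) @ sigma k (Suc m)"

end

(*
  Call the flip sequence sigma_m followed by the flip m+1 a block. By induction on m, applying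
  sigma_m and then flip_m returns every coloured permutation to itself. Hence a block acts on the
  first m+1 symbols as a right rotation that increments the colour of the wrapped symbol, so it
  has order k(m+1), and along its orbit the symbol in position m+1 takes k(m+1) distinct values.
  Since sigma_(m+1) followed by m+1 is exactly k(m+1) blocks, the states visited by sigma_(m+1)
  split into k(m+1) runs of sigma_m; each run is duplicate-free by induction, and distinct runs
  are disjoint because sigma_m never touches position m+1. Every flip smaller than the one taken
  leads back to a visited state: inside a run by induction, and at the end of a run because its
  last state is closed under all flips up to m. These are exactly the conditions making the
  states visited by sigma_n from 1^0 ... n^0 the greedy min-flip list.
*)
theory Submission imports Defs begin

definition flips :: "nat \<Rightarrow> nat list \<Rightarrow> csym list \<Rightarrow> csym list" where
  "flips k xs p = fold (flip k) xs p"

fun trace :: "nat \<Rightarrow> nat list \<Rightarrow> csym list \<Rightarrow> csym list list" where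
  "trace k [] p = [p]"
| "trace k (i # xs) p = p # trace k xs (flip k i p)"

lemma flip_0 [simp]: "flip k 0 p = p"
  by (simp add: flip_def)

lemma length_flip [simp]: "length (flip k i p) = length p"
  by (simp add: flip_def)

lemma flips_Nil [simp]: "flips k [] p = p"
  by (simp add: flips_def)

lemma flips_Cons [simp]: "flips k (i # xs) p = flips k xs (flip k i p)"
  by (simp add: flips_def)

lemma flips_append [simp]: "flips k (xs @ ys) p = flips k ys (flips k xs p)"
  by (simp add: flips_def)

lemma length_flips [simp]: "length (flips k xs p) = length p"
  by (induction xs arbitrary: p) simp_all

lemma flips_concat_replicate: "flips k (concat (replicate c xs)) p = (flips k xs ^^ c) p"
  by (induction c arbitrary: p) (simp_all add: funpow_Suc_right del: funpow.simps)

lemma trace_not_Nil [simp]: "trace k xs p \<noteq> []"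
  by (cases xs) simp_all

lemma hd_trace [simp]: "hd (trace k xs p) = p"
  by (cases xs) simp_all

lemma length_trace [simp]: "length (trace k xs p) = Suc (length xs)"
  by (induction xs arbitrary: p) simp_all

lemma last_trace [simp]: "last (trace k xs p) = flips k xs p"
  by (induction xs arbitrary: p) simp_all

lemma trace_append:
  "trace k (xs @ ys) p = butlast (trace k xs p) @ trace k ys (flips k xs p)"
  by (induction xs arbitrary: p) simp_all

lemma butlast_trace_snoc_last [simp]: "butlast (trace k xs p) @ [flips k xs p] = trace k xs p"
  by (metis append_butlast_last_id last_trace trace_not_Nil)

lemma trace_snoc: "trace k (xs @ [i]) p = trace k xs p @ [flips k (xs @ [i]) p]"
  by (simp add: trace_append flip: append_assoc)

lemma trace_take: "trace k (take t xs) p = take (Suc t) (trace k xs p)"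
  by (induction xs arbitrary: t p) (auto simp: take_Cons split: nat.split)

lemma nth_trace: "t \<le> length xs \<Longrightarrow> trace k xs p ! t = flips k (take t xs) p"
  by (induction xs arbitrary: t p) (auto simp: nth_Cons split: nat.split)

lemma set_trace_append_right: "set (trace k ys (flips k xs p)) \<subseteq> set (trace k (xs @ ys) p)"
  by (simp add: trace_append)

definition backtracking :: "nat \<Rightarrow> nat list \<Rightarrow> csym list \<Rightarrow> bool" where
  "backtracking k xs p \<longleftrightarrow>
     (\<forall>ys i zs. xs = ys @ i # zs \<longrightarrow>
        (\<forall>j \<in> {1..<i}. flip k j (flips k ys p) \<in> set (trace k ys p)))"

lemma backtracking_Nil [simp]: "backtracking k [] p"
  by (simp add: backtracking_def)

lemma backtracking_snoc:
  "backtracking k (xs @ [i]) p \<longleftrightarrow>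
     backtracking k xs p \<and> (\<forall>j \<in> {1..<i}. flip k j (flips k xs p) \<in> set (trace k xs p))"
proof -
  have "xs @ [i] = ys @ i' # zs \<longleftrightarrow>
          (zs = [] \<and> ys = xs \<and> i' = i) \<or> (\<exists>zs'. zs = zs' @ [i] \<and> xs = ys @ i' # zs')"
    for ys i' zs
    by (cases zs rule: rev_exhaust) auto
  then show ?thesis
    unfolding backtracking_def by (auto 4 3)
qed

lemma backtracking_append:
  assumes "backtracking k xs p" and "backtracking k ys (flips k xs p)"
  shows "backtracking k (xs @ ys) p"
  unfolding backtracking_def
proof (intro allI impI)
  fix us i zs assume "xs @ ys = us @ i # zs"
  then consider ws where "xs = us @ i # ws"
    | ws where "us = xs @ ws" and "ys = ws @ i # zs"
    by (auto simp: append_eq_append_conv2 append_eq_Cons_conv)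
  then show "\<forall>j \<in> {1..<i}. flip k j (flips k us p) \<in> set (trace k us p)"
  proof cases
    case 1
    then show ?thesis using assms(1) by (auto simp: backtracking_def)
  next
    case 2
    then show ?thesis
      using assms(2) set_trace_append_right[of k ws xs p] by (auto simp: backtracking_def)
  qed
qed

lemma backtracking_concat_replicate:
  assumes step: "\<And>p. P p \<Longrightarrow> backtracking k xs p \<and> P (flips k xs p)" and "P p"
  shows "backtracking k (concat (replicate c xs)) p"
  using \<open>P p\<close>
proof (induction c arbitrary: p)
  case 0
  then show ?case by simp
next
  case (Suc c)
  then show ?case using step by (simp add: backtracking_append)
qed

definition colored_perm :: "nat \<Rightarrow> csym list \<Rightarrow> bool" where
  "colored_perm k p \<longleftrightarrow> distinct (map fst p) \<and> (\<forall>x \<in> set p. snd x < k)"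

lemma colored_perm_flip: "colored_perm k p \<Longrightarrow> colored_perm k (flip k i p)"
proof -
  assume p: "colored_perm k p"
  have "map fst (flip k i p) = rev (take i (map fst p)) @ drop i (map fst p)"
    by (simp add: flip_def incr_col_def rev_map take_map drop_map)
  moreover have "distinct (rev (take i (map fst p)) @ drop i (map fst p))"
    using p by (simp add: colored_perm_def set_take_disj_set_drop_if_distinct)
  moreover have "snd x < k" if "x \<in> set (flip k i p)" for x
    using that p by (fastforce simp: colored_perm_def flip_def incr_col_def dest: in_set_takeD in_set_dropD)
  ultimately show ?thesis by (simp add: colored_perm_def)
qed

lemma colored_perm_flips: "colored_perm k p \<Longrightarrow> colored_perm k (flips k xs p)"
  by (induction xs arbitrary: p) (simp_all add: colored_perm_flip)

lemma incr_col_funpow: "snd x < k \<Longrightarrow> (incr_col k ^^ a) x = (fst x, (snd x + a) mod k)"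
  by (induction a) (simp_all add: incr_col_def mod_Suc_eq)

lemma add_mod_cancel_left_less:
  fixes a b c k :: nat
  assumes "(c + a) mod k = (c + b) mod k" and "a < k" and "b < k"
  shows "a = b"
proof -
  have "x = y" if "(c + x) mod k = (c + y) mod k" "x < k" "y \<le> x" for x y :: nat
  proof -
    have "k dvd x - y"
      using mod_eq_dvd_iff_nat[of "c + y" "c + x" k] that by simp
    then show ?thesis
      using that by (cases "x - y = 0") (auto dest: dvd_imp_le)
  qed
  from this[of a b] this[of b a] show ?thesis
    using assms by (cases "b \<le> a") auto
qed

lemma nth_flip_ge: "i \<le> m \<Longrightarrow> m < length p \<Longrightarrow> flip k i p ! m = p ! m"
  by (simp add: flip_def nth_append min_def)

lemma nth_trace_ge:
  assumes "set xs \<subseteq> {..m}" and "m < length p" and "q \<in> set (trace k xs p)"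
  shows "q ! m = p ! m"
  using assms
proof (induction xs arbitrary: p)
  case (Cons i xs)
  then show ?case using Cons.IH[of "flip k i p"] by (auto simp: nth_flip_ge)
qed simp

lemma flip_Suc_if_flip:
  assumes "flip k m r = q" and "m < length r"
  shows "flip k (Suc m) r = incr_col k (q ! m) # take m q @ drop (Suc m) q"
proof -
  have q: "q = map (incr_col k) (rev (take m r)) @ drop m r"
    using assms(1) by (simp add: flip_def)
  have "take (Suc m) r = take m r @ [r ! m]"
    using assms(2) by (simp add: take_Suc_conv_app_nth)
  moreover have "q ! m = r ! m" and "take m q = map (incr_col k) (rev (take m r))"
    and "drop (Suc m) q = drop (Suc m) r"
    using assms(2) by (simp_all add: q nth_append)
  ultimately show ?thesis by (simp add: flip_def)
qed

lemma sigma_Suc: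
  "sigma k (Suc m) = concat (replicate (k * Suc m - 1) (sigma k m @ [Suc m])) @ sigma k m"
  by (cases m) simp_all

lemma sigma_Suc_snoc:
  assumes "0 < k"
  shows "sigma k (Suc m) @ [Suc m] = concat (replicate (k * Suc m) (sigma k m @ [Suc m]))"
proof -
  let ?B = "sigma k m @ [Suc m]"
  have "sigma k (Suc m) @ [Suc m] = concat (replicate (k * Suc m - 1) ?B @ [?B])"
    by (simp add: sigma_Suc)
  also have "replicate (k * Suc m - 1) ?B @ [?B] = replicate (k * Suc m) ?B"
    using assms by (simp add: replicate_append_same flip: replicate_Suc)
  finally show ?thesis .
qed

lemma set_concat_replicate_subset: "set (concat (replicate c xs)) \<subseteq> set xs"
  by (induction c) auto

lemma set_sigma: "set (sigma k m) \<subseteq> {1..m}"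
proof (induction m)
  case (Suc m)
  then have "set (sigma k m @ [Suc m]) \<subseteq> {1..Suc m}" by auto
  moreover have "set (sigma k (Suc m)) \<subseteq> set (sigma k m @ [Suc m])"
    using set_concat_replicate_subset[of _ "sigma k m @ [Suc m]"]
    unfolding sigma_Suc set_append by blast
  ultimately show ?case by blast
qed simp

definition rot :: "nat \<Rightarrow> csym list \<Rightarrow> csym list" where
  "rot k P = incr_col k (last P) # butlast P"

lemma length_rot_funpow: "P \<noteq> [] \<Longrightarrow> length ((rot k ^^ j) P) = length P"
proof (induction j)
  case (Suc j)
  then have "(rot k ^^ j) P \<noteq> []" by (metis length_0_conv)
  with Suc show ?case by (simp add: rot_def)
qed simp

lemma rot_funpow:
  "r \<le> length P \<Longrightarrow>
     (rot k ^^ r) P = map (incr_col k) (drop (length P - r) P) @ take (length P - r) P"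
proof (induction r)
  case (Suc r)
  let ?i = "length P - Suc r"
  have i: "?i < length P" "length P - r = Suc ?i" using Suc.prems by auto
  have "(rot k ^^ Suc r) P = rot k (map (incr_col k) (drop (Suc ?i) P) @ take (Suc ?i) P)"
    using Suc i by simp
  also have "\<dots> = map (incr_col k) (drop ?i P) @ take ?i P"
    using i Cons_nth_drop_Suc[OF i(1), symmetric]
    by (simp add: rot_def take_Suc_conv_app_nth butlast_append)
  finally show ?case .
qed simp

lemma rot_funpow_mult: "(rot k ^^ (a * length P)) P = map (incr_col k ^^ a) P"
proof (induction a)
  case (Suc a)
  have "(rot k ^^ (Suc a * length P)) P = (rot k ^^ length P) (map (incr_col k ^^ a) P)"
    by (simp add: funpow_add Suc)
  also have "\<dots> = map (incr_col k ^^ Suc a) P"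
    using rot_funpow[of "length (map (incr_col k ^^ a) P)" "map (incr_col k ^^ a) P" k] by simp
  finally show ?case .
qed simp

lemma last_rot_funpow:
  assumes "r < length P"
  shows "last ((rot k ^^ (a * length P + r)) P) = (incr_col k ^^ a) (P ! (length P - Suc r))"
proof -
  let ?Q = "map (incr_col k ^^ a) P"
  have "(rot k ^^ (a * length P + r)) P = (rot k ^^ r) ?Q"
    by (simp add: funpow_add rot_funpow_mult flip: add.commute)
  also have "\<dots> = map (incr_col k) (drop (length P - r) ?Q) @ take (length P - r) ?Q"
    using assms rot_funpow[of r ?Q] by simp
  also have "last \<dots> = last (take (length P - r) ?Q)"
    using assms by (intro last_appendR) auto
  also have "length P - r = Suc (length P - Suc r)"
    using assms by simp
  finally show ?thesis
    using assms by (simp add: take_Suc_conv_app_nth)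
qed

lemma rot_funpow_period:
  assumes "\<forall>x \<in> set P. snd x < k"
  shows "(rot k ^^ (k * length P)) P = P"
  using assms by (simp add: rot_funpow_mult incr_col_funpow map_idI)

lemma inj_on_last_rot_funpow:
  assumes "colored_perm k P"
  shows "inj_on (\<lambda>j. last ((rot k ^^ j) P)) {..<k * length P}"
proof (rule inj_onI)
  let ?n = "length P"
  fix j1 j2 assume j: "j1 \<in> {..<k * ?n}" "j2 \<in> {..<k * ?n}"
    and eq: "last ((rot k ^^ j1) P) = last ((rot k ^^ j2) P)"
  then have n: "0 < ?n" by auto
  have last_eq: "last ((rot k ^^ j) P) =
      (fst (P ! (?n - Suc (j mod ?n))), (snd (P ! (?n - Suc (j mod ?n))) + j div ?n) mod k)" for j
  proof -
    let ?i = "?n - Suc (j mod ?n)"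
    have "snd (P ! ?i) < k"
      using assms n by (simp add: colored_perm_def)
    moreover have "last ((rot k ^^ j) P) = (incr_col k ^^ (j div ?n)) (P ! ?i)"
      using last_rot_funpow[where P = P and k = k and r = "j mod ?n" and a = "j div ?n"] n
      by (simp add: div_mult_mod_eq)
    ultimately show ?thesis by (simp add: incr_col_funpow)
  qed
  have "fst (P ! (?n - Suc (j1 mod ?n))) = fst (P ! (?n - Suc (j2 mod ?n)))"
    using eq by (simp add: last_eq)
  then have "?n - Suc (j1 mod ?n) = ?n - Suc (j2 mod ?n)"
    using nth_eq_iff_index_eq[of "map fst P" "?n - Suc (j1 mod ?n)" "?n - Suc (j2 mod ?n)"]
      assms n by (simp add: colored_perm_def)
  then have mod_eq: "j1 mod ?n = j2 mod ?n"
    using mod_less_divisor[OF n, of j1] mod_less_divisor[OF n, of j2] by arith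
  have "j1 div ?n < k" "j2 div ?n < k"
    using j by (auto intro: less_mult_imp_div_less)
  moreover have "(snd (P ! (?n - Suc (j1 mod ?n))) + j1 div ?n) mod k
      = (snd (P ! (?n - Suc (j1 mod ?n))) + j2 div ?n) mod k"
    using eq mod_eq by (simp add: last_eq)
  ultimately have "j1 div ?n = j2 div ?n"
    by (blast intro: add_mod_cancel_left_less)
  with mod_eq show "j1 = j2" by (metis div_mult_mod_eq)
qed

lemma trace_concat_replicate_snoc:
  "trace k (concat (replicate c (xs @ [i]))) p =
     concat (map (\<lambda>j. trace k xs ((flips k (xs @ [i]) ^^ j) p)) [0..<c])
       @ [(flips k (xs @ [i]) ^^ c) p]"
proof (induction c arbitrary: p)
  case (Suc c)
  have "butlast (trace k (xs @ [i]) p) = trace k xs p"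
    by (simp only: trace_snoc butlast_snoc)
  with Suc show ?case
    by (simp add: trace_append map_upt_Suc funpow_Suc_right del: upt_Suc funpow.simps)
qed simp

lemma trace_sigma_Suc:
  assumes "0 < k"
  shows "trace k (sigma k (Suc m)) p =
    concat (map (\<lambda>j. trace k (sigma k m) ((flips k (sigma k m @ [Suc m]) ^^ j) p)) [0..<k * Suc m])"
proof -
  have "trace k (sigma k (Suc m) @ [Suc m]) p =
      concat (map (\<lambda>j. trace k (sigma k m) ((flips k (sigma k m @ [Suc m]) ^^ j) p)) [0..<k * Suc m])
        @ [(flips k (sigma k m @ [Suc m]) ^^ (k * Suc m)) p]"
    unfolding sigma_Suc_snoc[OF assms] by (rule trace_concat_replicate_snoc)
  then show ?thesis by (simp only: trace_snoc append1_eq_conv)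
qed

lemma distinct_concat_map_upt:
  assumes "\<And>j. j < c \<Longrightarrow> distinct (f j)"
    and "\<And>i j. i < j \<Longrightarrow> j < c \<Longrightarrow> set (f i) \<inter> set (f j) = {}"
  shows "distinct (concat (map f [0..<c]))"
  using assms
proof (induction c)
  case (Suc c)
  then have "set (concat (map f [0..<c])) \<inter> set (f c) = {}"
    by fastforce
  with Suc show ?case by simp
qed simp

text \<open>The appended flip \<open>Suc m\<close> makes \<^const>\<open>backtracking\<close> also require that every
  flip up to \<open>m\<close> of the final state leads back into the trace.\<close>

definition greedy_cycle :: "nat \<Rightarrow> nat \<Rightarrow> nat list \<Rightarrow> csym list \<Rightarrow> bool" where
  "greedy_cycle k m xs p \<longleftrightarrow>
     flip k m (flips k xs p) = p \<and> distinct (trace k xs p) \<and> backtracking k (xs @ [Suc m]) p"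

context
  fixes k m :: nat
  assumes k: "0 < k"
    and greedy_cycle_sigma_m:
      "\<And>p. colored_perm k p \<Longrightarrow> m \<le> length p \<Longrightarrow> greedy_cycle k m (sigma k m) p"
begin

lemma flips_block_eq_rot:
  assumes "colored_perm k p" and "Suc m \<le> length p"
  shows "flips k (sigma k m @ [Suc m]) p = rot k (take (Suc m) p) @ drop (Suc m) p"
proof -
  have "flip k m (flips k (sigma k m) p) = p"
    using greedy_cycle_sigma_m assms by (simp add: greedy_cycle_def)
  then have "flips k (sigma k m @ [Suc m]) p = incr_col k (p ! m) # take m p @ drop (Suc m) p"
    using assms(2) by (simp add: flip_Suc_if_flip)
  moreover have "take (Suc m) p = take m p @ [p ! m]"
    using assms(2) by (simp add: take_Suc_conv_app_nth)
  ultimately show ?thesis by (simp add: rot_def)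
qed

lemma flips_block_funpow:
  assumes "colored_perm k p" and "Suc m \<le> length p"
  shows "(flips k (sigma k m @ [Suc m]) ^^ j) p = (rot k ^^ j) (take (Suc m) p) @ drop (Suc m) p"
proof (induction j)
  case (Suc j)
  let ?B = "flips k (sigma k m @ [Suc m])"
  have "colored_perm k ((?B ^^ j) p)"
    using colored_perm_flips[OF assms(1)] by (simp only: flips_concat_replicate[symmetric])
  moreover have "Suc m \<le> length ((?B ^^ j) p)"
    using assms(2) by (simp only: flips_concat_replicate[symmetric] length_flips)
  ultimately have "(?B ^^ Suc j) p = rot k (take (Suc m) ((?B ^^ j) p)) @ drop (Suc m) ((?B ^^ j) p)"
    by (simp only: funpow.simps o_apply flips_block_eq_rot)
  moreover have "length ((rot k ^^ j) (take (Suc m) p)) = Suc m"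
    using assms(2) by (subst length_rot_funpow) auto
  ultimately show ?case
    using Suc by simp
qed simp

lemma flips_block_funpow_period:
  assumes "colored_perm k p" and "Suc m \<le> length p"
  shows "(flips k (sigma k m @ [Suc m]) ^^ (k * Suc m)) p = p"
  using rot_funpow_period[of "take (Suc m) p" k] assms
  by (fastforce simp: flips_block_funpow colored_perm_def min_absorb2 dest: in_set_takeD)

lemma inj_on_nth_flips_block_funpow:
  assumes "colored_perm k p" and "Suc m \<le> length p"
  shows "inj_on (\<lambda>j. (flips k (sigma k m @ [Suc m]) ^^ j) p ! m) {..<k * Suc m}"
proof -
  let ?P = "take (Suc m) p"
  have "colored_perm k ?P"
    using assms(1) by (auto simp: colored_perm_def take_map[symmetric] dest: in_set_takeD)
  then have "inj_on (\<lambda>j. last ((rot k ^^ j) ?P)) {..<k * Suc m}"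
    using inj_on_last_rot_funpow[of k ?P] assms(2) by (simp add: min_absorb2)
  moreover have "(flips k (sigma k m @ [Suc m]) ^^ j) p ! m = last ((rot k ^^ j) ?P)" for j
  proof -
    have len: "length ((rot k ^^ j) ?P) = Suc m"
      using assms(2) by (subst length_rot_funpow) auto
    then have "(rot k ^^ j) ?P \<noteq> []" by auto
    with len show ?thesis
      by (simp add: flips_block_funpow[OF assms] nth_append last_conv_nth del: flips_append)
  qed
  ultimately show ?thesis by simp
qed

lemma flip_flips_sigma_Suc:
  assumes "colored_perm k q" and "Suc m \<le> length q"
  shows "flip k (Suc m) (flips k (sigma k (Suc m)) q) = q"
proof -
  have "flip k (Suc m) (flips k (sigma k (Suc m)) q) = flips k (sigma k (Suc m) @ [Suc m]) q"
    by simp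
  also have "\<dots> = q"
    unfolding sigma_Suc_snoc[OF k] flips_concat_replicate by (rule flips_block_funpow_period[OF assms])
  finally show ?thesis .
qed

lemma distinct_trace_sigma_Suc:
  assumes "colored_perm k q" and "Suc m \<le> length q"
  shows "distinct (trace k (sigma k (Suc m)) q)"
proof -
  define Y where "Y = (\<lambda>j. (flips k (sigma k m @ [Suc m]) ^^ j) q)"
  have Y: "colored_perm k (Y j)" "length (Y j) = length q" for j
    using colored_perm_flips[OF assms(1)] unfolding Y_def flips_concat_replicate[symmetric] by simp_all
  have "trace k (sigma k (Suc m)) q = concat (map (\<lambda>j. trace k (sigma k m) (Y j)) [0..<k * Suc m])"
    unfolding Y_def by (rule trace_sigma_Suc[OF k])
  moreover have "distinct (trace k (sigma k m) (Y j))" for j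
    using greedy_cycle_sigma_m[OF Y(1)] Y(2) assms(2) by (simp add: greedy_cycle_def)
  \<comment> \<open>runs are told apart by position \<open>m\<close>, which \<^term>\<open>sigma k m\<close> never flips\<close>
  moreover have "x ! m = Y j ! m" if "x \<in> set (trace k (sigma k m) (Y j))" for x j
  proof -
    have "set (sigma k m) \<subseteq> {..m}" using set_sigma[of k m] by auto
    then show ?thesis using nth_trace_ge[OF _ _ that] Y(2) assms(2) by simp
  qed
  moreover have "Y i ! m \<noteq> Y j ! m" if "i < j" and "j < k * Suc m" for i j
    using inj_on_nth_flips_block_funpow[OF assms] that unfolding inj_on_def Y_def by auto
  ultimately show ?thesis
    by (metis (no_types, lifting) distinct_concat_map_upt disjoint_iff)
qed

lemma backtracking_sigma_Suc:
  assumes "colored_perm k q" and "Suc m \<le> length q"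
  shows "backtracking k (sigma k (Suc m) @ [Suc (Suc m)]) q"
proof -
  let ?B = "sigma k m @ [Suc m]"
  let ?c = "k * Suc m"
  define Y where "Y = (flips k ?B ^^ (?c - 1)) q"
  have "backtracking k (concat (replicate ?c ?B)) q"
  proof (rule backtracking_concat_replicate[where P = "\<lambda>p. colored_perm k p \<and> Suc m \<le> length p"])
    fix p assume "colored_perm k p \<and> Suc m \<le> length p"
    then show "backtracking k ?B p \<and> colored_perm k (flips k ?B p) \<and> Suc m \<le> length (flips k ?B p)"
      using greedy_cycle_sigma_m[of p] colored_perm_flips[of k p ?B] by (simp add: greedy_cycle_def)
  qed (use assms in simp)
  then have "backtracking k (sigma k (Suc m) @ [Suc m]) q"
    by (simp only: sigma_Suc_snoc[OF k])
  then have "backtracking k (sigma k (Suc m)) q"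
    by (simp add: backtracking_snoc)
  moreover have "flips k (sigma k (Suc m)) q = flips k (sigma k m) Y"
    unfolding sigma_Suc[of k m] Y_def by (simp only: flips_append flips_concat_replicate)
  moreover have "set (trace k (sigma k m) Y) \<subseteq> set (trace k (sigma k (Suc m)) q)"
    using set_trace_append_right[of k "sigma k m" "concat (replicate (?c - 1) ?B)" q]
    unfolding sigma_Suc[of k m] Y_def by (simp only: flips_concat_replicate)
  moreover have "\<forall>j \<in> {1..<Suc m}. flip k j (flips k (sigma k m) Y) \<in> set (trace k (sigma k m) Y)"
  proof -
    have "colored_perm k Y" "Suc m \<le> length Y"
      using colored_perm_flips[OF assms(1)] assms(2)
      unfolding Y_def flips_concat_replicate[symmetric] by simp_all
    then show ?thesis
      using greedy_cycle_sigma_m[of Y] by (simp add: greedy_cycle_def backtracking_snoc)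
  qed
  moreover have "q \<in> set (trace k (sigma k (Suc m)) q)"
    using hd_in_set[OF trace_not_Nil] by simp
  ultimately show ?thesis
    using flip_flips_sigma_Suc[OF assms] by (auto simp: backtracking_snoc less_Suc_eq)
qed

lemma greedy_cycle_sigma_Suc:
  "colored_perm k q \<Longrightarrow> Suc m \<le> length q \<Longrightarrow> greedy_cycle k (Suc m) (sigma k (Suc m)) q"
  by (simp add: greedy_cycle_def flip_flips_sigma_Suc distinct_trace_sigma_Suc backtracking_sigma_Suc
      del: flips_append)

end


lemma greedy_cycle_sigma:
  assumes "0 < k"
  shows "colored_perm k p \<Longrightarrow> m \<le> length p \<Longrightarrow> greedy_cycle k m (sigma k m) p"
proof (induction m arbitrary: p)
  case 0
  then show ?case using backtracking_snoc[of k "[]" 1 p] by (simp add: greedy_cycle_def)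
next
  case (Suc m)
  then show ?case using greedy_cycle_sigma_Suc[OF assms] by blast
qed

lemma greedy_list_trace:
  assumes distinct: "distinct (trace k xs (start_perm n))"
    and backtracking: "backtracking k (xs @ [Suc n]) (start_perm n)"
    and range: "set xs \<subseteq> {1..n}"
  shows "greedy_list n k (trace k xs (start_perm n))"
  unfolding greedy_list_def
proof (intro conjI allI impI ballI)
  let ?p = "start_perm n"
  let ?Gs = "trace k xs ?p"
  show "?Gs \<noteq> []" and "hd ?Gs = ?p" by simp_all
  fix t assume "t < length ?Gs - 1"
  then have t: "t < length xs" by simp
  have step: "?Gs ! (t + 1) = flip k (xs ! t) (?Gs ! t)"
    using t by (simp add: nth_trace take_Suc_conv_app_nth)
  have "distinct (take (Suc t) ?Gs @ [?Gs ! Suc t])"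
    using distinct distinct_take[of ?Gs "Suc (Suc t)"] t
    by (simp only: take_Suc_conv_app_nth length_trace Suc_less_eq)
  then have fresh: "flip k (xs ! t) (?Gs ! t) \<notin> set (take (t + 1) ?Gs)"
    by (simp flip: step)
  have "backtracking k xs ?p"
    using backtracking by (simp add: backtracking_snoc)
  then have "\<forall>j \<in> {1..<xs ! t}. flip k j (flips k (take t xs) ?p) \<in> set (trace k (take t xs) ?p)"
    using id_take_nth_drop[OF t] unfolding backtracking_def by blast
  then have "flip k j (?Gs ! t) \<in> set (take (t + 1) ?Gs)" if "j \<in> {1..<xs ! t}" for j
    using that t by (simp add: nth_trace flip: trace_take)
  then show "\<exists>i \<in> {1..n}. ?Gs ! (t + 1) = flip k i (?Gs ! t) \<and>
      flip k i (?Gs ! t) \<notin> set (take (t + 1) ?Gs) \<and>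
      (\<forall>j \<in> {1..n}. j < i \<longrightarrow> flip k j (?Gs ! t) \<in> set (take (t + 1) ?Gs))"
    using step fresh range nth_mem[OF t] by (intro bexI[of _ "xs ! t"]) auto
next
  fix i assume "i \<in> {1..n}"
  then show "flip k i (last (trace k xs (start_perm n))) \<in> set (trace k xs (start_perm n))"
    using backtracking by (simp add: backtracking_snoc)
qed

theorem lemma4:
  fixes n k :: nat
  assumes "n \<ge> 1" and "k \<ge> 1"
  shows "\<exists>Gs. greedy_list n k Gs \<and>
           length (sigma k n) = length Gs - 1 \<and>
           (\<forall>t < length Gs - 1. Gs ! (t+1) = flip k (sigma k n ! t) (Gs ! t))"
proof (intro exI conjI allI impI)
  let ?Gs = "trace k (sigma k n) (start_perm n)"
  have "colored_perm k (start_perm n)"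
    using assms(2) by (simp add: colored_perm_def start_perm_def distinct_map inj_on_def)
  then have "greedy_cycle k n (sigma k n) (start_perm n)"
    using greedy_cycle_sigma assms(2) by (simp add: start_perm_def)
  then show "greedy_list n k ?Gs"
    using set_sigma by (intro greedy_list_trace) (simp_all add: greedy_cycle_def)
  show "length (sigma k n) = length ?Gs - 1" by simp
  fix t assume "t < length ?Gs - 1"
  then show "?Gs ! (t + 1) = flip k (sigma k n ! t) (?Gs ! t)"
    by (simp add: nth_trace take_Suc_conv_app_nth)
qed

end
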